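(* Assume $\gamma\ge1$. Then $$\log\frac{\det(\underline V_{i,t}^{-1})}{\det(\Lambda^0_{i,t})}\le2d\log\Big\{\frac{3k(k+1)}{8}+\gamma k+2\lambda e_k\Big\}.$$
   Context: $d,k\ge1$, $i+t-1\le k$. $C_{j,u}=[1,0_{j-1}^\top,1,0_{k-j+u-1}^\top,1,0_{k-u}^\top]\otimes I_d\in\mathbb R^{d\times(2k+1)d}$. $V_{0,k}=\mathrm{diag}(\gamma I_d,\gamma I_{kd}+\lambda L_{\rm user}\otimes I_d,\gamma I_{kd}+\lambda L_{\rm time}\otimes I_d)$ with $\lambda\ge0$, where $L_{\rm user},L_{\rm time}$ are the Laplacians ($L=QQ^\top$, $Q$ signed incidence matrix) of a user graph and a time graph on $k$ vertices each, and $e_k$ is the total number of edges of the two graphs. Pairs are ordered $(1,1),(1,2),(2,1),(1,3),(2,2),(3,1),\dots$ and $\mathcal O_{i,t}$ is the set of pairs strictly before $(i,t)$ (all with $j+u-1\le k$). For $(j,u)\in\mathcal O_{i,t}$: $x_{j,u}\in\mathbb R^d$ with $\|x_{j,u}\|\le1$, $\phi_{j,u}=C_{j,u}^\top x_{j,u}$, $\tilde\sigma^2_{j,u}=\pi_{j,u}(1-\pi_{j,u})$ with $\pi_{j,u}\in(0,1)$. $V_{i,t}=V_{0,k}+\sum_{(j,u)\in\mathcal O_{i,t}}\tilde\sigma^2_{j,u}\phi_{j,u}\phi_{j,u}^\top$, $\underline V_{i,t}=(C_{i,t}V_{i,t}^{-1}C_{i,t}^\top)^{-1}$, $\Lambda^0_{i,t}=C_{i,t}V_{i,t}^{-1}V_{0,k}V_{i,t}^{-1}C_{i,t}^\top$.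 *)

theory Defs
  imports "Jordan_Normal_Form.Gauss_Jordan_Elimination" "Jordan_Normal_Form.Determinant"
begin

(* Matrix inverse (total version; only applied to invertible matrices here) *)
definition minv :: "real mat \<Rightarrow> real mat" where
  "minv A = (case mat_inverse A of Some B \<Rightarrow> B | None \<Rightarrow> 0\<^sub>m (dim_row A) (dim_col A))"

definition kron :: "real mat \<Rightarrow> real mat \<Rightarrow> real mat" where
  "kron A B = mat (dim_row A * dim_row B) (dim_col A * dim_col B)
     (\<lambda>(a, b). A $$ (a div dim_row B, b div dim_col B) * B $$ (a mod dim_row B, b mod dim_col B))"

definition incidence :: "nat \<Rightarrow> (nat \<times> nat) list \<Rightarrow> real mat" where
  "incidence k es = mat k (length es)
     (\<lambda>(v, e). if v = fst (es ! e) then 1 else if v = snd (es ! e) then -1 else 0)"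

definition laplacian :: "nat \<Rightarrow> (nat \<times> nat) list \<Rightarrow> real mat" where
  "laplacian k es = incidence k es * transpose_mat (incidence k es)"

definition simple_graph :: "nat \<Rightarrow> (nat \<times> nat) list \<Rightarrow> bool" where
  "simple_graph k es \<longleftrightarrow> distinct es \<and> (\<forall>(a, b) \<in> set es. a < b \<and> b < k)"

definition Cmat :: "nat \<Rightarrow> nat \<Rightarrow> nat \<Rightarrow> nat \<Rightarrow> real mat" where
  "Cmat d k j u = kron (mat 1 (2 * k + 1) (\<lambda>(_, b). if b = 0 \<or> b = j \<or> b = k + u then 1 else 0))
                       (1\<^sub>m d)"

definition V0 :: "nat \<Rightarrow> nat \<Rightarrow> real \<Rightarrow> real \<Rightarrow> (nat \<times> nat) list \<Rightarrow> (nat \<times> nat) list \<Rightarrow> real mat" where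
  "V0 d k \<gamma> lam Eu Et =
     four_block_mat (\<gamma> \<cdot>\<^sub>m 1\<^sub>m d) (0\<^sub>m d (2 * k * d)) (0\<^sub>m (2 * k * d) d)
       (four_block_mat (\<gamma> \<cdot>\<^sub>m 1\<^sub>m (k * d) + lam \<cdot>\<^sub>m kron (laplacian k Eu) (1\<^sub>m d))
          (0\<^sub>m (k * d) (k * d)) (0\<^sub>m (k * d) (k * d))
          (\<gamma> \<cdot>\<^sub>m 1\<^sub>m (k * d) + lam \<cdot>\<^sub>m kron (laplacian k Et) (1\<^sub>m d)))"

(* ordering of pairs: (1,1),(1,2),(2,1),(1,3),(2,2),(3,1),... *)
definition pair_before :: "nat \<times> nat \<Rightarrow> nat \<times> nat \<Rightarrow> bool" where
  "pair_before p q \<longleftrightarrow> fst p + snd p < fst q + snd q \<or> (fst p + snd p = fst q + snd q \<and> fst p < fst q)"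

definition Obs :: "nat \<Rightarrow> nat \<Rightarrow> nat \<Rightarrow> (nat \<times> nat) set" where
  "Obs k i t = {(j, u). 1 \<le> j \<and> 1 \<le> u \<and> j + u - 1 \<le> k \<and> pair_before (j, u) (i, t)}"

definition phi :: "nat \<Rightarrow> nat \<Rightarrow> (nat \<times> nat \<Rightarrow> real vec) \<Rightarrow> nat \<times> nat \<Rightarrow> real vec" where
  "phi d k x p = transpose_mat (Cmat d k (fst p) (snd p)) *\<^sub>v x p"

definition Vmat :: "nat \<Rightarrow> nat \<Rightarrow> real \<Rightarrow> real \<Rightarrow> (nat \<times> nat) list \<Rightarrow> (nat \<times> nat) list
     \<Rightarrow> (nat \<times> nat \<Rightarrow> real vec) \<Rightarrow> (nat \<times> nat \<Rightarrow> real) \<Rightarrow> nat \<Rightarrow> nat \<Rightarrow> real mat" where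
  "Vmat d k \<gamma> lam Eu Et x \<pi> i t =
     mat ((2 * k + 1) * d) ((2 * k + 1) * d) (\<lambda>(a, b).
       V0 d k \<gamma> lam Eu Et $$ (a, b)
       + (\<Sum>p\<in>Obs k i t. \<pi> p * (1 - \<pi> p) * (phi d k x p $ a) * (phi d k x p $ b)))"

definition Vbar :: "nat \<Rightarrow> nat \<Rightarrow> real \<Rightarrow> real \<Rightarrow> (nat \<times> nat) list \<Rightarrow> (nat \<times> nat) list
     \<Rightarrow> (nat \<times> nat \<Rightarrow> real vec) \<Rightarrow> (nat \<times> nat \<Rightarrow> real) \<Rightarrow> nat \<Rightarrow> nat \<Rightarrow> real mat" where
  "Vbar d k \<gamma> lam Eu Et x \<pi> i t =
     minv (Cmat d k i t * minv (Vmat d k \<gamma> lam Eu Et x \<pi> i t) * transpose_mat (Cmat d k i t))"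

definition Lambda0 :: "nat \<Rightarrow> nat \<Rightarrow> real \<Rightarrow> real \<Rightarrow> (nat \<times> nat) list \<Rightarrow> (nat \<times> nat) list
     \<Rightarrow> (nat \<times> nat \<Rightarrow> real vec) \<Rightarrow> (nat \<times> nat \<Rightarrow> real) \<Rightarrow> nat \<Rightarrow> nat \<Rightarrow> real mat" where
  "Lambda0 d k \<gamma> lam Eu Et x \<pi> i t =
     Cmat d k i t * minv (Vmat d k \<gamma> lam Eu Et x \<pi> i t) * V0 d k \<gamma> lam Eu Et
       * minv (Vmat d k \<gamma> lam Eu Et x \<pi> i t) * transpose_mat (Cmat d k i t)"

end

theory Submission
  imports Defs
begin

(* Since the Laplacian terms are positive semidefinite and \<gamma> \<ge> 1, V_0 dominates the identity,
   while each of the at most k^2 observations adds a term pi(1-pi) phi phi^T whose quadratic form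
   is at most (2k+1)/4 times the squared norm. Hence V_0 \<le> V \<le> \<mu> V_0 in the Loewner order,
   with \<mu> = 1 + k^2 (2k+1)/4. Writing W = V^-1 C^T, the two matrices in the claim are the
   congruences W^T V W and W^T V_0 W, and W is injective because V W = C^T; so the first is at
   most \<mu> times the second. Determinants of positive definite matrices are monotone in the
   Loewner order (induction on the dimension via Schur complements), which gives ratio \<le> \<mu>^d,
   and \<mu> is at most the square of the bracket in the claim. *)

definition quad_form :: "real mat \<Rightarrow> nat \<Rightarrow> (nat \<Rightarrow> real) \<Rightarrow> real" where
  "quad_form M n f = (\<Sum>i<n. \<Sum>j<n. f i * M $$ (i, j) * f j)"

definition pos_def :: "real mat \<Rightarrow> nat \<Rightarrow> bool" where
  "pos_def M n \<longleftrightarrow> (\<forall>f. (\<exists>i<n. f i \<noteq> 0) \<longrightarrow> 0 < quad_form M n f)"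

definition loewner_le :: "real mat \<Rightarrow> real mat \<Rightarrow> nat \<Rightarrow> bool" where
  "loewner_le P Q n \<longleftrightarrow> (\<forall>f. quad_form P n f \<le> quad_form Q n f)"

definition schur_compl :: "real mat \<Rightarrow> nat \<Rightarrow> real mat" where
  "schur_compl M n = mat n n (\<lambda>(i, j).
     M $$ (Suc i, Suc j) - M $$ (Suc i, 0) * M $$ (0, Suc j) / M $$ (0, 0))"

definition prepend :: "real \<Rightarrow> (nat \<Rightarrow> real) \<Rightarrow> nat \<Rightarrow> real" where
  "prepend c y i = (if i = 0 then c else y (i - 1))"

lemma symmetric_mat_entry:
  "transpose_mat M = M \<Longrightarrow> M \<in> carrier_mat n n \<Longrightarrow> i < n \<Longrightarrow> j < n \<Longrightarrow> M $$ (i, j) = M $$ (j, i)"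
  by (metis carrier_matD index_transpose_mat(1))

lemma quad_form_prepend:
  assumes M: "M \<in> carrier_mat (Suc n) (Suc n)" and sM: "transpose_mat M = M" and a: "M $$ (0, 0) \<noteq> 0"
  shows "quad_form M (Suc n) (prepend c y) = quad_form (schur_compl M n) n y
     + (M $$ (0, 0) * c + (\<Sum>j<n. M $$ (0, Suc j) * y j))\<^sup>2 / M $$ (0, 0)"
proof -
  define a where "a = M $$ (0, 0)"
  define b where "b = (\<Sum>j<n. M $$ (0, Suc j) * y j)"
  define S where "S = (\<Sum>i<n. \<Sum>j<n. y i * M $$ (Suc i, Suc j) * y j)"
  have sym0: "M $$ (Suc i, 0) = M $$ (0, Suc i)" if "i < n" for i
    using symmetric_mat_entry[OF sM M] that by simp
  have "quad_form M (Suc n) (prepend c y) = c * a * c + (\<Sum>j<n. c * M $$ (0, Suc j) * y j)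
      + (\<Sum>i<n. y i * M $$ (Suc i, 0) * c) + S"
    unfolding quad_form_def sum.lessThan_Suc_shift prepend_def a_def S_def by (simp add: sum.distrib)
  also have "(\<Sum>j<n. c * M $$ (0, Suc j) * y j) = c * b"
    unfolding b_def sum_distrib_left by (simp add: mult.assoc)
  also have "(\<Sum>i<n. y i * M $$ (Suc i, 0) * c) = c * b"
    unfolding b_def sum_distrib_left by (rule sum.cong) (auto simp: sym0)
  finally have full: "quad_form M (Suc n) (prepend c y) = c * a * c + c * b + c * b + S" .
  have "quad_form (schur_compl M n) n y
      = (\<Sum>i<n. \<Sum>j<n. y i * M $$ (Suc i, Suc j) * y j - (y i * M $$ (0, Suc i)) * (M $$ (0, Suc j) * y j) / a)"
    unfolding quad_form_def schur_compl_def a_def by (intro sum.cong refl) (auto simp: sym0 algebra_simps)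
  also have "\<dots> = S - b * b / a"
    unfolding S_def b_def sum_subtractf sum_divide_distrib sum_product by (simp add: mult.commute)
  finally have compl: "quad_form (schur_compl M n) n y = S - b * b / a" .
  show ?thesis
    unfolding full compl a_def[symmetric] b_def[symmetric] using a unfolding a_def[symmetric]
    by (simp add: field_simps power2_eq_square)
qed

lemma quad_form_prepend_zero: "quad_form M (Suc n) (prepend 1 (\<lambda>_. 0)) = M $$ (0, 0)"
  unfolding quad_form_def sum.lessThan_Suc_shift prepend_def by simp

lemma transpose_schur_compl:
  assumes "M \<in> carrier_mat (Suc n) (Suc n)" and "transpose_mat M = M"
  shows "transpose_mat (schur_compl M n) = schur_compl M n"
proof (rule eq_matI)
  fix i j assume "i < dim_row (schur_compl M n)" "j < dim_col (schur_compl M n)"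
  hence "i < n" "j < n" by (auto simp: schur_compl_def)
  moreover have "M $$ (Suc j, Suc i) = M $$ (Suc i, Suc j)" "M $$ (Suc j, 0) = M $$ (0, Suc j)"
    "M $$ (0, Suc i) = M $$ (Suc i, 0)"
    using symmetric_mat_entry[OF assms(2,1)] \<open>i < n\<close> \<open>j < n\<close> by simp_all
  ultimately show "transpose_mat (schur_compl M n) $$ (i, j) = schur_compl M n $$ (i, j)"
    by (simp add: schur_compl_def)
qed (auto simp: schur_compl_def)

text \<open>Row reduction with the first row clears the first column below the pivot.\<close>
lemma det_eq_mult_det_schur_compl:
  assumes M: "M \<in> carrier_mat (Suc n) (Suc n)" and a: "M $$ (0, 0) \<noteq> 0"
  shows "det M = M $$ (0, 0) * det (schur_compl M n)"
proof -
  define E where "E = mat (Suc n) (Suc n) (\<lambda>(i, j).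
    if i = j then 1 else if j = 0 then - M $$ (i, 0) / M $$ (0, 0) else 0)"
  have E: "E \<in> carrier_mat (Suc n) (Suc n)" unfolding E_def by simp
  have "det E = prod_list (diag_mat E)"
    by (rule det_lower_triangular[OF _ E]) (auto simp: E_def)
  also have "diag_mat E = map (\<lambda>_. 1) [0..<Suc n]" unfolding diag_mat_def E_def by auto
  also have "prod_list (map (\<lambda>_. 1) [0..<Suc n]) = (1::real)" by (induct n) auto
  finally have det_E: "det E = 1" .
  define A1 where "A1 = mat 1 1 (\<lambda>_. M $$ (0, 0))"
  define A2 where "A2 = mat 1 n (\<lambda>(_, j). M $$ (0, Suc j))"
  have EM: "E * M = four_block_mat A1 A2 (0\<^sub>m n 1) (schur_compl M n)"
  proof (rule eq_matI)
    fix i j assume "i < dim_row (four_block_mat A1 A2 (0\<^sub>m n 1) (schur_compl M n))"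
      and "j < dim_col (four_block_mat A1 A2 (0\<^sub>m n 1) (schur_compl M n))"
    hence i: "i < Suc n" and j: "j < Suc n" by (auto simp: A1_def schur_compl_def)
    have "(E * M) $$ (i, j) = (\<Sum>l<Suc n. E $$ (i, l) * M $$ (l, j))"
      using i j M E by (simp add: scalar_prod_def lessThan_atLeast0)
    also have "\<dots> = E $$ (i, 0) * M $$ (0, j) + (\<Sum>l<n. E $$ (i, Suc l) * M $$ (Suc l, j))"
      by (rule sum.lessThan_Suc_shift)
    also have "\<dots> = (if i = 0 then M $$ (0, j) else M $$ (i, j) - M $$ (i, 0) / M $$ (0, 0) * M $$ (0, j))"
    proof (cases i)
      case (Suc i')
      have "(\<Sum>l<n. E $$ (i, Suc l) * M $$ (Suc l, j)) = (\<Sum>l<n. if l = i' then M $$ (i, j) else 0)"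
        using i Suc by (intro sum.cong refl) (auto simp: E_def)
      thus ?thesis using i Suc by (simp add: E_def)
    qed (simp add: E_def)
    also have "\<dots> = four_block_mat A1 A2 (0\<^sub>m n 1) (schur_compl M n) $$ (i, j)"
      using i j a by (cases i; cases j) (auto simp: A1_def A2_def schur_compl_def)
    finally show "(E * M) $$ (i, j) = four_block_mat A1 A2 (0\<^sub>m n 1) (schur_compl M n) $$ (i, j)" .
  qed (use M in \<open>auto simp: E_def A1_def schur_compl_def\<close>)
  have "det M = det (E * M)" using det_mult[OF E M] det_E by simp
  also have "\<dots> = det A1 * det (schur_compl M n)" unfolding EM
    by (rule det_four_block_mat_lower_left_zero_col) (auto simp: A1_def A2_def schur_compl_def)
  also have "det A1 = M $$ (0, 0)" by (subst det_single) (auto simp: A1_def)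
  finally show ?thesis .
qed

text \<open>Minimising over the first coordinate turns both the positivity and the comparison of
  quadratic forms into the same statements for the Schur complements.\<close>
lemma det_mono_loewner:
  assumes "P \<in> carrier_mat n n" "Q \<in> carrier_mat n n"
    and "transpose_mat P = P" "transpose_mat Q = Q"
    and "pos_def P n" "loewner_le P Q n"
  shows "0 < det P \<and> det P \<le> det Q"
  using assms
proof (induction n arbitrary: P Q)
  case 0
  thus ?case by simp
next
  case (Suc n)
  note P = Suc.prems(1) and Q = Suc.prems(2) and sP = Suc.prems(3) and sQ = Suc.prems(4)
  have pd: "0 < quad_form P (Suc n) f" if "\<exists>i<Suc n. f i \<noteq> 0" for f
    using Suc.prems(5) that unfolding pos_def_def by blast
  have le: "quad_form P (Suc n) f \<le> quad_form Q (Suc n) f" for f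
    using Suc.prems(6) unfolding loewner_le_def by blast
  have aP: "0 < P $$ (0, 0)"
    using pd[of "prepend 1 (\<lambda>_. 0)"] by (auto simp: quad_form_prepend_zero prepend_def)
  have aPQ: "P $$ (0, 0) \<le> Q $$ (0, 0)"
    using le[of "prepend 1 (\<lambda>_. 0)"] by (simp add: quad_form_prepend_zero)
  hence aQ: "0 < Q $$ (0, 0)" using aP by linarith
  have "pos_def (schur_compl P n) n"
    unfolding pos_def_def
  proof (intro allI impI)
    fix y :: "nat \<Rightarrow> real" assume "\<exists>i<n. y i \<noteq> 0"
    define c where "c = - (\<Sum>j<n. P $$ (0, Suc j) * y j) / P $$ (0, 0)"
    have "0 < quad_form P (Suc n) (prepend c y)"
      using pd[of "prepend c y"] \<open>\<exists>i<n. y i \<noteq> 0\<close> by (force simp: prepend_def)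
    also have "quad_form P (Suc n) (prepend c y) = quad_form (schur_compl P n) n y"
      using quad_form_prepend[OF P sP, of c y] aP by (simp add: c_def)
    finally show "0 < quad_form (schur_compl P n) n y" .
  qed
  moreover have "loewner_le (schur_compl P n) (schur_compl Q n) n"
    unfolding loewner_le_def
  proof
    fix y :: "nat \<Rightarrow> real"
    define c where "c = - (\<Sum>j<n. Q $$ (0, Suc j) * y j) / Q $$ (0, 0)"
    have "quad_form (schur_compl P n) n y \<le> quad_form P (Suc n) (prepend c y)"
      using quad_form_prepend[OF P sP, of c y] aP by simp
    also have "\<dots> \<le> quad_form Q (Suc n) (prepend c y)" by (rule le)
    also have "\<dots> = quad_form (schur_compl Q n) n y"
      using quad_form_prepend[OF Q sQ, of c y] aQ by (simp add: c_def)
    finally show "quad_form (schur_compl P n) n y \<le> quad_form (schur_compl Q n) n y" .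
  qed
  ultimately have "0 < det (schur_compl P n) \<and> det (schur_compl P n) \<le> det (schur_compl Q n)"
    using transpose_schur_compl[OF P sP] transpose_schur_compl[OF Q sQ]
    by (intro Suc.IH) (auto simp: schur_compl_def)
  thus ?case
    using det_eq_mult_det_schur_compl[OF P] det_eq_mult_det_schur_compl[OF Q] aP aQ aPQ
    by (simp add: mult_mono)
qed

lemma pos_def_det_pos:
  "P \<in> carrier_mat n n \<Longrightarrow> transpose_mat P = P \<Longrightarrow> pos_def P n \<Longrightarrow> 0 < det P"
  using det_mono_loewner[of P n P] by (simp add: loewner_le_def)

lemma sum_lessThan_add: "(\<Sum>i<m + n. g i) = (\<Sum>i<m. g i) + (\<Sum>i<n. g (m + i))"
  for m n :: nat
  by (induct n) (auto simp: add.assoc)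

lemma sum_lessThan_mult: "(\<Sum>a<m * d. g a) = (\<Sum>i<m. \<Sum>r<d. g (i * d + r))"
  for m d :: nat
proof (induct m)
  case (Suc m)
  have "Suc m * d = m * d + d" by simp
  thus ?case using Suc by (simp only: sum_lessThan_add) simp
qed simp

lemma quad_form_cong: "(\<And>i. i < n \<Longrightarrow> f i = g i) \<Longrightarrow> quad_form M n f = quad_form M n g"
  unfolding quad_form_def by auto

lemma quad_form_add:
  "A \<in> carrier_mat n n \<Longrightarrow> B \<in> carrier_mat n n \<Longrightarrow> quad_form (A + B) n f = quad_form A n f + quad_form B n f"
  unfolding quad_form_def by (simp add: sum.distrib[symmetric] algebra_simps)

lemma quad_form_smult: "A \<in> carrier_mat n n \<Longrightarrow> quad_form (c \<cdot>\<^sub>m A) n f = c * quad_form A n f"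
  unfolding quad_form_def by (simp add: sum_distrib_left algebra_simps)

lemma quad_form_one: "quad_form (1\<^sub>m n) n f = (\<Sum>i<n. (f i)\<^sup>2)"
proof -
  have "(\<Sum>j<n. f i * 1\<^sub>m n $$ (i, j) * f j) = (\<Sum>j<n. if j = i then f i * f i else 0)" if "i < n" for i
    using that by (intro sum.cong refl) auto
  thus ?thesis unfolding quad_form_def by (simp add: power2_eq_square)
qed

lemma quad_form_four_block_diag:
  assumes "A \<in> carrier_mat n1 n1" and "B \<in> carrier_mat n2 n2"
  shows "quad_form (four_block_mat A (0\<^sub>m n1 n2) (0\<^sub>m n2 n1) B) (n1 + n2) f
    = quad_form A n1 f + quad_form B n2 (\<lambda>i. f (n1 + i))"
  using assms unfolding quad_form_def sum_lessThan_add by (simp add: sum.distrib)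

lemma scalar_prod_mult_mat_vec_eq_quad_form:
  assumes M: "M \<in> carrier_mat n n" and v: "v \<in> carrier_vec n"
  shows "v \<bullet> (M *\<^sub>v v) = quad_form M n (($) v)"
proof -
  have "v \<bullet> (M *\<^sub>v v) = (\<Sum>i<n. v $ i * (\<Sum>j<n. M $$ (i, j) * v $ j))"
    using M v by (simp add: scalar_prod_def lessThan_atLeast0)
  thus ?thesis unfolding quad_form_def by (simp add: sum_distrib_left mult.assoc)
qed

lemma quad_form_congruence:
  assumes W: "W \<in> carrier_mat n d" and M: "M \<in> carrier_mat n n"
  shows "quad_form (transpose_mat W * M * W) d f = quad_form M n (($) (W *\<^sub>v vec d f))"
proof -
  let ?y = "vec d f"
  have WM: "transpose_mat W * M \<in> carrier_mat d n" using W M by simp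
  have Wy: "W *\<^sub>v ?y \<in> carrier_vec n" using W by simp
  have "?y \<bullet> ((transpose_mat W * M * W) *\<^sub>v ?y) = ?y \<bullet> (transpose_mat W *\<^sub>v (M *\<^sub>v (W *\<^sub>v ?y)))"
    using assoc_mult_mat_vec[OF WM W vec_carrier] assoc_mult_mat_vec[of "transpose_mat W" d n M n] W M Wy
    by simp
  also have "\<dots> = (transpose_mat W *\<^sub>v (M *\<^sub>v (W *\<^sub>v ?y))) \<bullet> ?y"
    using W M by (simp add: comm_scalar_prod[of _ d])
  also have "\<dots> = (M *\<^sub>v (W *\<^sub>v ?y)) \<bullet> (W *\<^sub>v ?y)"
    using M Wy by (simp add: transpose_vec_mult_scalar[OF W vec_carrier])
  also have "\<dots> = (W *\<^sub>v ?y) \<bullet> (M *\<^sub>v (W *\<^sub>v ?y))"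
    using M Wy by (simp add: comm_scalar_prod[of _ n])
  finally have "?y \<bullet> ((transpose_mat W * M * W) *\<^sub>v ?y) = (W *\<^sub>v ?y) \<bullet> (M *\<^sub>v (W *\<^sub>v ?y))" .
  moreover have "quad_form (transpose_mat W * M * W) d f = quad_form (transpose_mat W * M * W) d (($) ?y)"
    by (rule quad_form_cong) simp
  moreover have "transpose_mat W * M * W \<in> carrier_mat d d" using WM W by simp
  ultimately show ?thesis
    by (simp add: scalar_prod_mult_mat_vec_eq_quad_form[OF _ vec_carrier]
        scalar_prod_mult_mat_vec_eq_quad_form[OF M Wy])
qed

lemma transpose_congruence:
  fixes W M :: "real mat"
  assumes W: "W \<in> carrier_mat n d" and M: "M \<in> carrier_mat n n" and sM: "transpose_mat M = M"
  shows "transpose_mat (transpose_mat W * M * W) = transpose_mat W * M * W"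
proof -
  have WM: "transpose_mat W * M \<in> carrier_mat d n" using W M by simp
  have "transpose_mat (transpose_mat W * M * W) = transpose_mat W * transpose_mat (transpose_mat W * M)"
    by (rule transpose_mult[OF WM W])
  also have "transpose_mat (transpose_mat W * M) = M * W"
    using transpose_mult[of "transpose_mat W" d n M n] W M sM by simp
  also have "transpose_mat W * (M * W) = transpose_mat W * M * W"
    using assoc_mult_mat[of "transpose_mat W" d n M n W d] W M by simp
  finally show ?thesis .
qed

lemma minv_inverse:
  assumes M: "M \<in> carrier_mat n n" and dM: "det M \<noteq> 0"
  shows "minv M \<in> carrier_mat n n" "M * minv M = 1\<^sub>m n" "minv M * M = 1\<^sub>m n"
proof -
  obtain B where "mat_inverse M = Some B"
  proof (cases "mat_inverse M")
    case None
    have "M \<in> Units (ring_mat TYPE(real) n n)" by (rule det_non_zero_imp_unit[OF M dM])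
    moreover have "M \<notin> Units (ring_mat TYPE(real) n n)" by (rule mat_inverse(1)[OF M None])
    ultimately show ?thesis by blast
  qed
  with mat_inverse(2)[OF M] show "minv M \<in> carrier_mat n n" "M * minv M = 1\<^sub>m n" "minv M * M = 1\<^sub>m n"
    unfolding minv_def by auto
qed

lemma minv_minv:
  assumes M: "M \<in> carrier_mat n n" and dM: "det M \<noteq> 0"
  shows "minv (minv M) = M"
proof -
  note B = minv_inverse[OF M dM]
  have "det M * det (minv M) = 1" using det_mult[OF M B(1)] B(2) by simp
  hence "det (minv M) \<noteq> 0" by auto
  note B' = minv_inverse[OF B(1) this]
  have "minv (minv M) = minv (minv M) * (minv M * M)" using B' by (simp add: B(3))
  also have "\<dots> = (minv (minv M) * minv M) * M" using B'(1) B(1) M by simp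
  also have "\<dots> = M" using B' M by simp
  finally show ?thesis .
qed

lemma transpose_minv:
  assumes M: "M \<in> carrier_mat n n" and dM: "det M \<noteq> 0" and sM: "transpose_mat M = M"
  shows "transpose_mat (minv M) = minv M"
proof -
  note B = minv_inverse[OF M dM]
  have BM: "transpose_mat (minv M) * M = 1\<^sub>m n"
    using transpose_mult[OF M B(1)] B(2) sM by simp
  have "transpose_mat (minv M) = transpose_mat (minv M) * (M * minv M)" using B by simp
  also have "\<dots> = (transpose_mat (minv M) * M) * minv M" using B(1) M by simp
  also have "\<dots> = minv M" using BM B(1) by simp
  finally show ?thesis .
qed

lemma pos_def_mono: "pos_def P n \<Longrightarrow> loewner_le P Q n \<Longrightarrow> pos_def Q n"
  unfolding pos_def_def loewner_le_def by (meson less_le_trans)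

lemma det_congruence_mono:
  fixes U V W :: "real mat"
  assumes U: "U \<in> carrier_mat n n" and V: "V \<in> carrier_mat n n" and W: "W \<in> carrier_mat n d"
    and sU: "transpose_mat U = U" and sV: "transpose_mat V = V"
    and pdU: "pos_def U n" and UV: "loewner_le U V n" and VU: "loewner_le V (\<mu> \<cdot>\<^sub>m U) n"
    and inj: "\<And>y. y \<in> carrier_vec d \<Longrightarrow> W *\<^sub>v y = 0\<^sub>v n \<Longrightarrow> y = 0\<^sub>v d"
  shows "0 < det (transpose_mat W * V * W)" and "0 < det (transpose_mat W * U * W)"
    and "det (transpose_mat W * V * W) \<le> \<mu> ^ d * det (transpose_mat W * U * W)"
proof -
  have W_nz: "\<exists>i<n. (W *\<^sub>v vec d f) $ i \<noteq> 0" if "\<exists>j<d. f j \<noteq> 0" for f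
  proof (rule ccontr)
    assume "\<not> (\<exists>i<n. (W *\<^sub>v vec d f) $ i \<noteq> 0)"
    hence "W *\<^sub>v vec d f = 0\<^sub>v n" using W by (intro eq_vecI) auto
    hence "vec d f = 0\<^sub>v d" by (rule inj[OF vec_carrier])
    with that show False by (metis index_vec index_zero_vec(1))
  qed
  note QA = quad_form_congruence[OF W V] and QL = quad_form_congruence[OF W U]
  have A: "transpose_mat W * V * W \<in> carrier_mat d d" and L: "transpose_mat W * U * W \<in> carrier_mat d d"
    using W U V by auto
  have sA: "transpose_mat (transpose_mat W * V * W) = transpose_mat W * V * W"
    and sL: "transpose_mat (transpose_mat W * U * W) = transpose_mat W * U * W"
    using transpose_congruence[OF W V sV] transpose_congruence[OF W U sU] by auto
  have pdA: "pos_def (transpose_mat W * V * W) d" and pdL: "pos_def (transpose_mat W * U * W) d"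
    using pos_def_mono[OF pdU UV] pdU W_nz unfolding pos_def_def QA QL by auto
  show "0 < det (transpose_mat W * V * W)" by (rule pos_def_det_pos[OF A sA pdA])
  show "0 < det (transpose_mat W * U * W)" by (rule pos_def_det_pos[OF L sL pdL])
  have "loewner_le (transpose_mat W * V * W) (\<mu> \<cdot>\<^sub>m (transpose_mat W * U * W)) d"
    using VU U unfolding loewner_le_def QA quad_form_smult[OF L] QL quad_form_smult[OF U] by auto
  moreover have "\<mu> \<cdot>\<^sub>m (transpose_mat W * U * W) \<in> carrier_mat d d" using L by simp
  moreover have "transpose_mat (\<mu> \<cdot>\<^sub>m (transpose_mat W * U * W)) = \<mu> \<cdot>\<^sub>m (transpose_mat W * U * W)"
  proof -
    have "transpose_mat (\<mu> \<cdot>\<^sub>m X) = \<mu> \<cdot>\<^sub>m transpose_mat X" for X :: "real mat"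
      by (intro eq_matI) auto
    thus ?thesis using sL by simp
  qed
  ultimately have "det (transpose_mat W * V * W) \<le> det (\<mu> \<cdot>\<^sub>m (transpose_mat W * U * W))"
    using det_mono_loewner[OF A _ sA _ pdA] by blast
  also have "\<dots> = \<mu> ^ d * det (transpose_mat W * U * W)" using W by simp
  finally show "det (transpose_mat W * V * W) \<le> \<mu> ^ d * det (transpose_mat W * U * W)" .
qed

lemma inverse_congruence:
  fixes U V C :: "real mat"
  assumes U: "U \<in> carrier_mat n n" and V: "V \<in> carrier_mat n n" and C: "C \<in> carrier_mat d n"
    and "det V \<noteq> 0" and sV: "transpose_mat V = V"
  defines "W \<equiv> minv V * transpose_mat C"
  shows "V * W = transpose_mat C"
    and "C * minv V * transpose_mat C = transpose_mat W * V * W"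
    and "C * minv V * U * minv V * transpose_mat C = transpose_mat W * U * W"
proof -
  define B where "B = minv V"
  have B: "B \<in> carrier_mat n n" and VB: "V * B = 1\<^sub>m n"
    using minv_inverse[OF V \<open>det V \<noteq> 0\<close>] unfolding B_def by auto
  have sB: "transpose_mat B = B" unfolding B_def by (rule transpose_minv[OF V \<open>det V \<noteq> 0\<close> sV])
  have W: "W \<in> carrier_mat n d" unfolding W_def B_def[symmetric] using B C by simp
  have WT: "transpose_mat W = C * B"
    unfolding W_def B_def[symmetric] using transpose_mult[OF B, of "transpose_mat C" d] C sB by simp
  show VW: "V * W = transpose_mat C"
    unfolding W_def B_def[symmetric] using VB B V C by (simp flip: assoc_mult_mat[of V n n B n])
  have "transpose_mat W * V * W = (C * B) * (V * W)"
    unfolding WT using B V C W by (intro assoc_mult_mat[of _ d n _ n _ d]) auto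
  thus "C * minv V * transpose_mat C = transpose_mat W * V * W" unfolding VW B_def ..
  have "transpose_mat W * U * W = (C * B * U) * (B * transpose_mat C)"
    unfolding WT by (simp only: W_def B_def)
  moreover have "C * B * U \<in> carrier_mat d n" using B U C by simp
  ultimately show "C * minv V * U * minv V * transpose_mat C = transpose_mat W * U * W"
    using assoc_mult_mat[of "C * B * U" d n B n "transpose_mat C" d] B C unfolding B_def by simp
qed

text \<open>With \<open>W = V\<^sup>-\<^sup>1 C\<^sup>T\<close> both matrices are congruences by \<open>W\<close>, and \<open>W\<close>
  is injective because \<open>V W = C\<^sup>T\<close>.\<close>
lemma det_inverse_congruence_le:
  fixes U V C :: "real mat"
  assumes U: "U \<in> carrier_mat n n" and V: "V \<in> carrier_mat n n" and C: "C \<in> carrier_mat d n"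
    and sU: "transpose_mat U = U" and sV: "transpose_mat V = V"
    and pdU: "pos_def U n" and UV: "loewner_le U V n" and VU: "loewner_le V (\<mu> \<cdot>\<^sub>m U) n"
    and inj: "\<And>y. y \<in> carrier_vec d \<Longrightarrow> transpose_mat C *\<^sub>v y = 0\<^sub>v n \<Longrightarrow> y = 0\<^sub>v d"
  shows "0 < det (C * minv V * transpose_mat C)"
    and "0 < det (C * minv V * U * minv V * transpose_mat C)"
    and "det (C * minv V * transpose_mat C) \<le> \<mu> ^ d * det (C * minv V * U * minv V * transpose_mat C)"
proof -
  have "det V \<noteq> 0" using pos_def_det_pos[OF V sV pos_def_mono[OF pdU UV]] by simp
  note eqs = inverse_congruence[OF U V C this sV]
  have W: "minv V * transpose_mat C \<in> carrier_mat n d"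
    using minv_inverse[OF V \<open>det V \<noteq> 0\<close>] C by simp
  have "y = 0\<^sub>v d" if y: "y \<in> carrier_vec d" and "(minv V * transpose_mat C) *\<^sub>v y = 0\<^sub>v n" for y
  proof (rule inj[OF y])
    have "transpose_mat C *\<^sub>v y = V *\<^sub>v ((minv V * transpose_mat C) *\<^sub>v y)"
      using assoc_mult_mat_vec[OF V W y] eqs(1) by simp
    thus "transpose_mat C *\<^sub>v y = 0\<^sub>v n"
      using V \<open>(minv V * transpose_mat C) *\<^sub>v y = 0\<^sub>v n\<close> by (intro eq_vecI) (auto simp: scalar_prod_def)
  qed
  from det_congruence_mono[OF U V W sU sV pdU UV VU this]
  show "0 < det (C * minv V * transpose_mat C)"
    and "0 < det (C * minv V * U * minv V * transpose_mat C)"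
    and "det (C * minv V * transpose_mat C) \<le> \<mu> ^ d * det (C * minv V * U * minv V * transpose_mat C)"
    unfolding eqs(2,3) by auto
qed

lemma Cauchy_Schwarz_sum:
  fixes a b :: "'i \<Rightarrow> real"
  shows "(\<Sum>i\<in>I. a i * b i)\<^sup>2 \<le> (\<Sum>i\<in>I. (a i)\<^sup>2) * (\<Sum>i\<in>I. (b i)\<^sup>2)"
proof -
  have swap: "(\<Sum>i\<in>I. \<Sum>j\<in>I. (a j)\<^sup>2 * (b i)\<^sup>2) = (\<Sum>i\<in>I. \<Sum>j\<in>I. (a i)\<^sup>2 * (b j)\<^sup>2)"
    by (rule sum.swap)
  have "0 \<le> (\<Sum>i\<in>I. \<Sum>j\<in>I. (a i * b j - a j * b i)\<^sup>2)"
    by (intro sum_nonneg) auto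
  also have "\<dots> = (\<Sum>i\<in>I. \<Sum>j\<in>I. (a i)\<^sup>2 * (b j)\<^sup>2) + (\<Sum>i\<in>I. \<Sum>j\<in>I. (a j)\<^sup>2 * (b i)\<^sup>2)
      - 2 * (\<Sum>i\<in>I. \<Sum>j\<in>I. (a i * b i) * (a j * b j))"
    by (simp add: power2_eq_square algebra_simps sum_subtractf sum.distrib sum_distrib_left)
  also have "\<dots> = 2 * ((\<Sum>i\<in>I. (a i)\<^sup>2) * (\<Sum>i\<in>I. (b i)\<^sup>2) - (\<Sum>i\<in>I. a i * b i)\<^sup>2)"
    unfolding swap by (simp add: sum_product power2_eq_square algebra_simps)
  finally show ?thesis by simp
qed

lemma quad_form_mult_transpose_nonneg:
  assumes Q: "Q \<in> carrier_mat k m"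
  shows "0 \<le> quad_form (Q * transpose_mat Q) k g"
proof -
  have "quad_form (Q * transpose_mat Q) k g
      = (\<Sum>i<k. \<Sum>j<k. \<Sum>e<m. (g i * Q $$ (i, e)) * (g j * Q $$ (j, e)))"
    unfolding quad_form_def using Q
    by (intro sum.cong refl) (simp add: scalar_prod_def lessThan_atLeast0 sum_distrib_left algebra_simps)
  also have "\<dots> = (\<Sum>e<m. (\<Sum>i<k. g i * Q $$ (i, e)) * (\<Sum>j<k. g j * Q $$ (j, e)))"
    by (simp add: sum_product, subst sum.swap, rule sum.cong, simp, subst sum.swap, simp)
  also have "\<dots> \<ge> 0" by (intro sum_nonneg) auto
  finally show ?thesis .
qed

lemma incidence_carrier: "incidence k es \<in> carrier_mat k (length es)"
  unfolding incidence_def by simp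

lemma laplacian_carrier: "laplacian k es \<in> carrier_mat k k"
  unfolding laplacian_def using incidence_carrier[of k es] by simp

lemma transpose_laplacian: "transpose_mat (laplacian k es) = laplacian k es"
  unfolding laplacian_def using incidence_carrier[of k es]
  by (simp add: transpose_mult[of "incidence k es" k "length es"])

lemma quad_form_laplacian_nonneg: "0 \<le> quad_form (laplacian k es) k g"
  unfolding laplacian_def by (rule quad_form_mult_transpose_nonneg[OF incidence_carrier])

lemma kron_one_entry:
  assumes L: "L \<in> carrier_mat k k" and "a < k * d" and "b < k * d"
  shows "kron L (1\<^sub>m d) $$ (a, b) = (if a mod d = b mod d then L $$ (a div d, b div d) else 0)"
proof -
  have "0 < d" using assms(2) by (cases d) auto
  thus ?thesis using assms unfolding kron_def by (auto simp: mult.commute)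
qed

lemma kron_one_carrier: "L \<in> carrier_mat k k \<Longrightarrow> kron L (1\<^sub>m d) \<in> carrier_mat (k * d) (k * d)"
  unfolding kron_def by auto

lemma block_index_less: "i < k \<Longrightarrow> r < d \<Longrightarrow> i * d + r < k * d"
  for i k r d :: nat
proof -
  assume "i < k" "r < d"
  hence "(i + 1) * d \<le> k * d" by (intro mult_right_mono) auto
  with \<open>r < d\<close> show ?thesis by simp
qed

lemma quad_form_kron_one:
  assumes L: "L \<in> carrier_mat k k"
  shows "quad_form (kron L (1\<^sub>m d)) (k * d) f = (\<Sum>r<d. quad_form L k (\<lambda>i. f (i * d + r)))"
proof -
  have e: "kron L (1\<^sub>m d) $$ (i * d + r, j * d + s) = (if r = s then L $$ (i, j) else 0)"
    if "i < k" "j < k" "r < d" "s < d" for i j r s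
    using kron_one_entry[OF L block_index_less block_index_less] that by simp
  have "quad_form (kron L (1\<^sub>m d)) (k * d) f
     = (\<Sum>i<k. \<Sum>r<d. \<Sum>j<k. \<Sum>s<d. f (i * d + r) * kron L (1\<^sub>m d) $$ (i * d + r, j * d + s) * f (j * d + s))"
    unfolding quad_form_def sum_lessThan_mult ..
  also have "\<dots> = (\<Sum>i<k. \<Sum>r<d. \<Sum>j<k. f (i * d + r) * L $$ (i, j) * f (j * d + r))"
    by (intro sum.cong refl) (simp add: e if_distrib if_distribR cong: if_cong)
  also have "\<dots> = (\<Sum>r<d. \<Sum>i<k. \<Sum>j<k. f (i * d + r) * L $$ (i, j) * f (j * d + r))"
    by (rule sum.swap)
  finally show ?thesis unfolding quad_form_def .
qed

lemma transpose_kron_one: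
  assumes L: "L \<in> carrier_mat k k" and sL: "transpose_mat L = L"
  shows "transpose_mat (kron L (1\<^sub>m d)) = kron L (1\<^sub>m d)"
proof (rule eq_matI)
  fix a b assume "a < dim_row (kron L (1\<^sub>m d))" "b < dim_col (kron L (1\<^sub>m d))"
  hence a: "a < k * d" and b: "b < k * d" using kron_one_carrier[OF L, of d] by auto
  moreover have "0 < d" using a by (cases d) auto
  ultimately have "a div d < k" "b div d < k" by (auto simp: div_less_iff_less_mult)
  hence "kron L (1\<^sub>m d) $$ (b, a) = kron L (1\<^sub>m d) $$ (a, b)"
    unfolding kron_one_entry[OF L a b] kron_one_entry[OF L b a] using symmetric_mat_entry[OF sL L] by auto
  thus "transpose_mat (kron L (1\<^sub>m d)) $$ (a, b) = kron L (1\<^sub>m d) $$ (a, b)"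
    using a b kron_one_carrier[OF L, of d] by simp
qed (use L in \<open>auto simp: kron_def\<close>)

lemma transpose_four_block_diag:
  fixes A B :: "real mat"
  assumes A: "A \<in> carrier_mat n1 n1" and B: "B \<in> carrier_mat n2 n2"
    and "transpose_mat A = A" and "transpose_mat B = B"
  shows "transpose_mat (four_block_mat A (0\<^sub>m n1 n2) (0\<^sub>m n2 n1) B) = four_block_mat A (0\<^sub>m n1 n2) (0\<^sub>m n2 n1) B"
  using A B symmetric_mat_entry[OF assms(3) A] symmetric_mat_entry[OF assms(4) B]
  by (intro eq_matI) auto

definition laplacian_block :: "nat \<Rightarrow> nat \<Rightarrow> real \<Rightarrow> real \<Rightarrow> (nat \<times> nat) list \<Rightarrow> real mat" where
  "laplacian_block d k \<gamma> lam es = \<gamma> \<cdot>\<^sub>m 1\<^sub>m (k * d) + lam \<cdot>\<^sub>m kron (laplacian k es) (1\<^sub>m d)"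

lemma laplacian_block_carrier: "laplacian_block d k \<gamma> lam es \<in> carrier_mat (k * d) (k * d)"
  unfolding laplacian_block_def using kron_one_carrier[OF laplacian_carrier] by auto

lemma transpose_laplacian_block: "transpose_mat (laplacian_block d k \<gamma> lam es) = laplacian_block d k \<gamma> lam es"
proof -
  have K: "kron (laplacian k es) (1\<^sub>m d) \<in> carrier_mat (k * d) (k * d)"
    by (rule kron_one_carrier[OF laplacian_carrier])
  have "transpose_mat (kron (laplacian k es) (1\<^sub>m d)) = kron (laplacian k es) (1\<^sub>m d)"
    by (rule transpose_kron_one[OF laplacian_carrier transpose_laplacian])
  hence "kron (laplacian k es) (1\<^sub>m d) $$ (j, i) = kron (laplacian k es) (1\<^sub>m d) $$ (i, j)"
    if "i < k * d" "j < k * d" for i j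
    using symmetric_mat_entry[OF _ K that] by simp
  thus ?thesis using K unfolding laplacian_block_def by (intro eq_matI) auto
qed

lemma quad_form_laplacian_block_ge:
  assumes "0 \<le> lam"
  shows "\<gamma> * (\<Sum>i<k * d. (f i)\<^sup>2) \<le> quad_form (laplacian_block d k \<gamma> lam es) (k * d) f"
proof -
  have K: "kron (laplacian k es) (1\<^sub>m d) \<in> carrier_mat (k * d) (k * d)"
    by (rule kron_one_carrier[OF laplacian_carrier])
  have "0 \<le> quad_form (kron (laplacian k es) (1\<^sub>m d)) (k * d) f"
    unfolding quad_form_kron_one[OF laplacian_carrier] by (intro sum_nonneg quad_form_laplacian_nonneg)
  with assms K show ?thesis
    unfolding laplacian_block_def
    by (simp add: quad_form_add[of _ "k * d"] quad_form_smult[of _ "k * d"] quad_form_one)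
qed

lemma V0_eq_four_block:
  "V0 d k \<gamma> lam Eu Et = four_block_mat (\<gamma> \<cdot>\<^sub>m 1\<^sub>m d) (0\<^sub>m d (k * d + k * d)) (0\<^sub>m (k * d + k * d) d)
     (four_block_mat (laplacian_block d k \<gamma> lam Eu) (0\<^sub>m (k * d) (k * d)) (0\<^sub>m (k * d) (k * d))
        (laplacian_block d k \<gamma> lam Et))"
proof -
  have "2 * k * d = k * d + k * d" by simp
  thus ?thesis unfolding V0_def laplacian_block_def by (simp only:)
qed

lemma V0_carrier: "V0 d k \<gamma> lam Eu Et \<in> carrier_mat ((2 * k + 1) * d) ((2 * k + 1) * d)"
proof -
  have "(2 * k + 1) * d = d + (k * d + k * d)" by simp
  thus ?thesis unfolding V0_eq_four_block
    by (simp only:) (intro four_block_carrier_mat laplacian_block_carrier smult_carrier_mat one_carrier_mat)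
qed

lemma transpose_V0: "transpose_mat (V0 d k \<gamma> lam Eu Et) = V0 d k \<gamma> lam Eu Et"
  unfolding V0_eq_four_block
  by (intro transpose_four_block_diag laplacian_block_carrier transpose_laplacian_block four_block_carrier_mat)
    auto

lemma quad_form_V0_ge:
  assumes "0 \<le> lam"
  shows "\<gamma> * (\<Sum>i<(2 * k + 1) * d. (f i)\<^sup>2) \<le> quad_form (V0 d k \<gamma> lam Eu Et) ((2 * k + 1) * d) f"
proof -
  have dims: "(2 * k + 1) * d = d + (k * d + k * d)" by simp
  have "quad_form (V0 d k \<gamma> lam Eu Et) ((2 * k + 1) * d) f
      = \<gamma> * (\<Sum>i<d. (f i)\<^sup>2) + quad_form (laplacian_block d k \<gamma> lam Eu) (k * d) (\<lambda>i. f (d + i))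
        + quad_form (laplacian_block d k \<gamma> lam Et) (k * d) (\<lambda>i. f (d + (k * d + i)))"
    unfolding V0_eq_four_block dims
    by (simp add: quad_form_four_block_diag laplacian_block_carrier quad_form_smult[of _ d] quad_form_one)
  moreover have "\<gamma> * (\<Sum>i<(2 * k + 1) * d. (f i)\<^sup>2) = \<gamma> * (\<Sum>i<d. (f i)\<^sup>2)
      + \<gamma> * (\<Sum>i<k * d. (f (d + i))\<^sup>2) + \<gamma> * (\<Sum>i<k * d. (f (d + (k * d + i)))\<^sup>2)"
    unfolding dims sum_lessThan_add by (simp add: algebra_simps)
  moreover have "\<gamma> * (\<Sum>i<k * d. (f (d + i))\<^sup>2)
      \<le> quad_form (laplacian_block d k \<gamma> lam Eu) (k * d) (\<lambda>i. f (d + i))"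
    and "\<gamma> * (\<Sum>i<k * d. (f (d + (k * d + i)))\<^sup>2)
      \<le> quad_form (laplacian_block d k \<gamma> lam Et) (k * d) (\<lambda>i. f (d + (k * d + i)))"
    by (rule quad_form_laplacian_block_ge[OF assms])+
  ultimately show ?thesis by linarith
qed

lemma pos_def_V0:
  assumes "0 < \<gamma>" and "0 \<le> lam"
  shows "pos_def (V0 d k \<gamma> lam Eu Et) ((2 * k + 1) * d)"
  unfolding pos_def_def
proof (intro allI impI)
  fix f :: "nat \<Rightarrow> real" assume "\<exists>i<(2 * k + 1) * d. f i \<noteq> 0"
  then obtain i where "i < (2 * k + 1) * d" "f i \<noteq> 0" by blast
  hence "0 < (\<Sum>i<(2 * k + 1) * d. (f i)\<^sup>2)" by (intro sum_pos2[of _ i]) auto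
  with assms(1) have "0 < \<gamma> * (\<Sum>i<(2 * k + 1) * d. (f i)\<^sup>2)" by simp
  also have "\<dots> \<le> quad_form (V0 d k \<gamma> lam Eu Et) ((2 * k + 1) * d) f"
    by (rule quad_form_V0_ge[OF assms(2)])
  finally show "0 < quad_form (V0 d k \<gamma> lam Eu Et) ((2 * k + 1) * d) f" .
qed

lemma Cmat_carrier: "Cmat d k j u \<in> carrier_mat d ((2 * k + 1) * d)"
  unfolding Cmat_def kron_def by simp

lemma Cmat_entry:
  assumes r: "r < d" and c: "c < (2 * k + 1) * d"
  shows "Cmat d k j u $$ (r, c) = (if r = c mod d \<and> (c div d = 0 \<or> c div d = j \<or> c div d = k + u) then 1 else 0)"
proof -
  have "0 < d" using r by simp
  hence "c div d < 2 * k + 1" using c by (simp add: div_less_iff_less_mult)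
  thus ?thesis using r c unfolding Cmat_def kron_def by auto
qed

lemma transpose_Cmat_mult_vec:
  assumes y: "y \<in> carrier_vec d" and a: "a < (2 * k + 1) * d"
  shows "(transpose_mat (Cmat d k j u) *\<^sub>v y) $ a
    = (if a div d = 0 \<or> a div d = j \<or> a div d = k + u then y $ (a mod d) else 0)"
proof -
  have "0 < d" using a by (cases d) auto
  have "(transpose_mat (Cmat d k j u) *\<^sub>v y) $ a = (\<Sum>r<d. Cmat d k j u $$ (r, a) * y $ r)"
    using Cmat_carrier[of d k j u] y a by (simp add: scalar_prod_def lessThan_atLeast0)
  also have "\<dots> = (\<Sum>r<d. if r = a mod d then
      (if a div d = 0 \<or> a div d = j \<or> a div d = k + u then y $ (a mod d) else 0) else 0)"
    using a by (intro sum.cong refl) (auto simp: Cmat_entry)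
  finally show ?thesis using \<open>0 < d\<close> by simp
qed

lemma transpose_Cmat_mult_vec_eq_0:
  assumes y: "y \<in> carrier_vec d" and "transpose_mat (Cmat d k j u) *\<^sub>v y = 0\<^sub>v ((2 * k + 1) * d)"
  shows "y = 0\<^sub>v d"
proof (rule eq_vecI)
  fix r assume "r < dim_vec (0\<^sub>v d)"
  hence r: "r < d" by simp
  hence "r < (2 * k + 1) * d" by (metis less_le_trans mult_le_mono1 mult_1 Suc_eq_plus1 le_add2)
  thus "y $ r = 0\<^sub>v d $ r"
    using transpose_Cmat_mult_vec[OF y, of r k j u] assms(2) r by simp
qed (use y in simp)

lemma sum_sq_transpose_Cmat_mult_vec_le:
  assumes y: "y \<in> carrier_vec d"
  shows "(\<Sum>a<(2 * k + 1) * d. ((transpose_mat (Cmat d k j u) *\<^sub>v y) $ a)\<^sup>2) \<le> real (2 * k + 1) * (y \<bullet> y)"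
proof -
  have "(\<Sum>a<(2 * k + 1) * d. ((transpose_mat (Cmat d k j u) *\<^sub>v y) $ a)\<^sup>2)
      \<le> (\<Sum>a<(2 * k + 1) * d. (y $ (a mod d))\<^sup>2)"
    by (intro sum_mono) (simp add: transpose_Cmat_mult_vec[OF y])
  also have "\<dots> = (\<Sum>i<2 * k + 1. \<Sum>r<d. (y $ r)\<^sup>2)"
    unfolding sum_lessThan_mult by (intro sum.cong refl) simp
  also have "\<dots> = real (2 * k + 1) * (y \<bullet> y)"
    using y by (simp add: scalar_prod_def lessThan_atLeast0 power2_eq_square)
  finally show ?thesis .
qed

lemma card_Obs_le: "card (Obs k i t) \<le> k * k"
proof -
  have "Obs k i t \<subseteq> {1..k} \<times> {1..k}" unfolding Obs_def by auto
  hence "card (Obs k i t) \<le> card ({1..k} \<times> {1..k})" by (intro card_mono) auto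
  thus ?thesis by (simp add: card_cartesian_product)
qed

lemma Vmat_carrier: "Vmat d k \<gamma> lam Eu Et x \<pi> i t \<in> carrier_mat ((2 * k + 1) * d) ((2 * k + 1) * d)"
  unfolding Vmat_def by simp

lemma transpose_Vmat: "transpose_mat (Vmat d k \<gamma> lam Eu Et x \<pi> i t) = Vmat d k \<gamma> lam Eu Et x \<pi> i t"
proof (rule eq_matI)
  fix a b assume "a < dim_row (Vmat d k \<gamma> lam Eu Et x \<pi> i t)" "b < dim_col (Vmat d k \<gamma> lam Eu Et x \<pi> i t)"
  hence a: "a < (2 * k + 1) * d" and b: "b < (2 * k + 1) * d" by (auto simp: Vmat_def)
  have "V0 d k \<gamma> lam Eu Et $$ (b, a) = V0 d k \<gamma> lam Eu Et $$ (a, b)"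
    by (rule symmetric_mat_entry[OF transpose_V0 V0_carrier b a])
  thus "transpose_mat (Vmat d k \<gamma> lam Eu Et x \<pi> i t) $$ (a, b) = Vmat d k \<gamma> lam Eu Et x \<pi> i t $$ (a, b)"
    using a b by (simp add: Vmat_def mult.commute mult.left_commute)
qed (auto simp: Vmat_def)

lemma quad_form_Vmat:
  "quad_form (Vmat d k \<gamma> lam Eu Et x \<pi> i t) ((2 * k + 1) * d) f
    = quad_form (V0 d k \<gamma> lam Eu Et) ((2 * k + 1) * d) f
      + (\<Sum>p\<in>Obs k i t. \<pi> p * (1 - \<pi> p) * (\<Sum>a<(2 * k + 1) * d. phi d k x p $ a * f a)\<^sup>2)"
proof -
  let ?n = "(2 * k + 1) * d"
  let ?w = "\<lambda>p. \<pi> p * (1 - \<pi> p)" and ?z = "\<lambda>p a. phi d k x p $ a * f a"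
  have "quad_form (Vmat d k \<gamma> lam Eu Et x \<pi> i t) ?n f
      = quad_form (V0 d k \<gamma> lam Eu Et) ?n f + (\<Sum>a<?n. \<Sum>b<?n. \<Sum>p\<in>Obs k i t. ?w p * (?z p a * ?z p b))"
    unfolding quad_form_def Vmat_def
    by (simp add: sum.distrib[symmetric] sum_distrib_left sum_distrib_right algebra_simps)
  also have "(\<Sum>a<?n. \<Sum>b<?n. \<Sum>p\<in>Obs k i t. ?w p * (?z p a * ?z p b))
      = (\<Sum>p\<in>Obs k i t. ?w p * (\<Sum>a<?n. ?z p a)\<^sup>2)"
  proof -
    have "(\<Sum>a<?n. \<Sum>b<?n. \<Sum>p\<in>Obs k i t. ?w p * (?z p a * ?z p b))
        = (\<Sum>p\<in>Obs k i t. \<Sum>a<?n. \<Sum>b<?n. ?w p * (?z p a * ?z p b))"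
      by (subst sum.swap, subst (2) sum.swap) (rule refl)
    also have "\<dots> = (\<Sum>p\<in>Obs k i t. ?w p * (\<Sum>a<?n. ?z p a)\<^sup>2)"
    proof (intro sum.cong refl)
      fix p
      have "(\<Sum>a<?n. ?z p a)\<^sup>2 = (\<Sum>a<?n. \<Sum>b<?n. ?z p a * ?z p b)"
        by (simp only: power2_eq_square sum_product)
      thus "(\<Sum>a<?n. \<Sum>b<?n. ?w p * (?z p a * ?z p b)) = ?w p * (\<Sum>a<?n. ?z p a)\<^sup>2"
        by (simp only: sum_distrib_left)
    qed
    finally show ?thesis .
  qed
  finally show ?thesis .
qed

lemma obs_weight_le:
  fixes p :: real
  assumes "0 < p" "p < 1"
  shows "0 \<le> p * (1 - p)" "p * (1 - p) \<le> 1 / 4"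
proof -
  show "0 \<le> p * (1 - p)" using assms by simp
  have "p * (1 - p) = 1 / 4 - (p - 1 / 2)\<^sup>2" by (simp add: power2_eq_square algebra_simps)
  thus "p * (1 - p) \<le> 1 / 4" by simp
qed

lemma obs_term_le:
  assumes y: "y \<in> carrier_vec d" and "y \<bullet> y \<le> 1" and "0 < p" "p < 1"
  shows "p * (1 - p) * (\<Sum>a<(2 * k + 1) * d. (transpose_mat (Cmat d k j u) *\<^sub>v y) $ a * f a)\<^sup>2
    \<le> real (2 * k + 1) / 4 * (\<Sum>a<(2 * k + 1) * d. (f a)\<^sup>2)"
proof -
  let ?n = "(2 * k + 1) * d"
  have "(\<Sum>a<?n. (transpose_mat (Cmat d k j u) *\<^sub>v y) $ a * f a)\<^sup>2
      \<le> (\<Sum>a<?n. ((transpose_mat (Cmat d k j u) *\<^sub>v y) $ a)\<^sup>2) * (\<Sum>a<?n. (f a)\<^sup>2)"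
    by (rule Cauchy_Schwarz_sum)
  also have "\<dots> \<le> real (2 * k + 1) * (\<Sum>a<?n. (f a)\<^sup>2)"
    using sum_sq_transpose_Cmat_mult_vec_le[OF y, of k j u] \<open>y \<bullet> y \<le> 1\<close>
    by (intro mult_right_mono sum_nonneg) (auto intro: order.trans[OF _ mult_left_le])
  finally have "p * (1 - p) * (\<Sum>a<?n. (transpose_mat (Cmat d k j u) *\<^sub>v y) $ a * f a)\<^sup>2
      \<le> 1 / 4 * (real (2 * k + 1) * (\<Sum>a<?n. (f a)\<^sup>2))"
    using obs_weight_le[OF assms(3,4)] by (intro mult_mono) auto
  thus ?thesis by simp
qed

lemma loewner_le_V0_Vmat:
  assumes "\<And>p. p \<in> Obs k i t \<Longrightarrow> 0 < \<pi> p \<and> \<pi> p < 1"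
  shows "loewner_le (V0 d k \<gamma> lam Eu Et) (Vmat d k \<gamma> lam Eu Et x \<pi> i t) ((2 * k + 1) * d)"
  unfolding loewner_le_def quad_form_Vmat
  using assms by (auto intro!: sum_nonneg mult_nonneg_nonneg simp: less_imp_le)

lemma loewner_le_Vmat_smult_V0:
  assumes "1 \<le> \<gamma>" and "0 \<le> lam"
    and x: "\<And>p. p \<in> Obs k i t \<Longrightarrow> x p \<in> carrier_vec d \<and> sqrt (x p \<bullet> x p) \<le> 1"
    and \<pi>: "\<And>p. p \<in> Obs k i t \<Longrightarrow> 0 < \<pi> p \<and> \<pi> p < 1"
  shows "loewner_le (Vmat d k \<gamma> lam Eu Et x \<pi> i t)
    ((1 + real k ^ 2 * (2 * real k + 1) / 4) \<cdot>\<^sub>m V0 d k \<gamma> lam Eu Et) ((2 * k + 1) * d)"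
  unfolding loewner_le_def
proof
  fix f :: "nat \<Rightarrow> real"
  let ?n = "(2 * k + 1) * d" and ?Q0 = "quad_form (V0 d k \<gamma> lam Eu Et) ((2 * k + 1) * d) f"
  define F where "F = (\<Sum>a<?n. (f a)\<^sup>2)"
  have "0 \<le> F" unfolding F_def by (intro sum_nonneg) auto
  have "F \<le> \<gamma> * F" using \<open>1 \<le> \<gamma>\<close> \<open>0 \<le> F\<close> by (simp add: mult_le_cancel_right1)
  also have "\<dots> \<le> ?Q0" unfolding F_def by (rule quad_form_V0_ge[OF \<open>0 \<le> lam\<close>])
  finally have "F \<le> ?Q0" .
  have obs_term: "\<pi> p * (1 - \<pi> p) * (\<Sum>a<?n. phi d k x p $ a * f a)\<^sup>2 \<le> real (2 * k + 1) / 4 * F"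
    if "p \<in> Obs k i t" for p
    unfolding phi_def F_def using x[OF that] \<pi>[OF that] by (intro obs_term_le) auto
  have "quad_form (Vmat d k \<gamma> lam Eu Et x \<pi> i t) ?n f
      \<le> ?Q0 + real (card (Obs k i t)) * (real (2 * k + 1) / 4 * F)"
    unfolding quad_form_Vmat using sum_bounded_above[OF obs_term] by simp
  also have "\<dots> \<le> ?Q0 + real k ^ 2 * (real (2 * k + 1) / 4 * F)"
    using card_Obs_le[of k i t] \<open>0 \<le> F\<close>
    by (intro add_left_mono mult_right_mono) (auto simp: power2_eq_square simp flip: of_nat_mult)
  also have "\<dots> \<le> ?Q0 + real k ^ 2 * (real (2 * k + 1) / 4 * ?Q0)"
    using \<open>F \<le> ?Q0\<close> by (intro add_left_mono mult_left_mono) auto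
  also have "\<dots> = quad_form ((1 + real k ^ 2 * (2 * real k + 1) / 4) \<cdot>\<^sub>m V0 d k \<gamma> lam Eu Et) ?n f"
    unfolding quad_form_smult[OF V0_carrier] by (simp add: algebra_simps)
  finally show "quad_form (Vmat d k \<gamma> lam Eu Et x \<pi> i t) ?n f
    \<le> quad_form ((1 + real k ^ 2 * (2 * real k + 1) / 4) \<cdot>\<^sub>m V0 d k \<gamma> lam Eu Et) ?n f" .
qed

lemma ln_div_le_of_le_power:
  fixes a b c :: real
  assumes "0 < a" "0 < b" "0 < c" "a \<le> c ^ n * b"
  shows "ln (a / b) \<le> real n * ln c"
proof -
  have "a / b \<le> c ^ n" using assms by (simp add: pos_divide_le_eq)
  hence "ln (a / b) \<le> ln (c ^ n)" using assms by simp
  thus ?thesis using assms by (simp add: ln_realpow)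
qed

lemma inflation_le_sq:
  fixes k e :: nat and \<gamma> lam :: real
  assumes "1 \<le> k" and "1 \<le> \<gamma>" and "0 \<le> lam"
  shows "1 + real k ^ 2 * (2 * real k + 1) / 4 \<le> (3 * real k * (real k + 1) / 8 + \<gamma> * real k + 2 * lam * real e)\<^sup>2"
proof -
  define r where "r = real k"
  have r: "1 \<le> r" using assms(1) unfolding r_def by simp
  have "r \<le> \<gamma> * r" using assms(2) r by simp
  moreover have "0 \<le> 2 * lam * real e" using assms(3) by simp
  ultimately have base: "3 * r * (r + 1) / 8 + r \<le> 3 * r * (r + 1) / 8 + \<gamma> * r + 2 * lam * real e"
    by linarith
  have "(3 * r * (r + 1) / 8 + r)\<^sup>2 - (1 + r\<^sup>2 * (2 * r + 1) / 4)
      = (9 * r ^ 4 + 34 * r ^ 3 + 105 * r\<^sup>2 - 64) / 64"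
    by (simp add: power2_eq_square power3_eq_cube power4_eq_xxxx field_simps)
  moreover have "0 \<le> (9 * r ^ 4 + 34 * r ^ 3 + 105 * r\<^sup>2 - 64) / 64"
  proof -
    have "1 \<le> r\<^sup>2" "0 \<le> r ^ 3" "0 \<le> r ^ 4" using r by auto
    hence "64 \<le> 9 * r ^ 4 + 34 * r ^ 3 + 105 * r\<^sup>2" by linarith
    thus ?thesis by simp
  qed
  ultimately have "1 + r\<^sup>2 * (2 * r + 1) / 4 \<le> (3 * r * (r + 1) / 8 + r)\<^sup>2" by linarith
  also have "\<dots> \<le> (3 * r * (r + 1) / 8 + \<gamma> * r + 2 * lam * real e)\<^sup>2"
    using base r by (intro power_mono) auto
  finally show ?thesis unfolding r_def .
qed

theorem lemmaE11:
  fixes d k i t :: nat and \<gamma> lam :: real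
    and Eu Et :: "(nat \<times> nat) list"
    and x :: "nat \<times> nat \<Rightarrow> real vec" and \<pi> :: "nat \<times> nat \<Rightarrow> real"
  assumes "1 \<le> d" and "1 \<le> k"
    and "1 \<le> i" and "1 \<le> t" and "i + t - 1 \<le> k"
    and "\<gamma> \<ge> 1" and "lam \<ge> 0"
    and "simple_graph k Eu" and "simple_graph k Et"
    and "\<And>p. p \<in> Obs k i t \<Longrightarrow> x p \<in> carrier_vec d \<and> sqrt (x p \<bullet> x p) \<le> 1"
    and "\<And>p. p \<in> Obs k i t \<Longrightarrow> 0 < \<pi> p \<and> \<pi> p < 1"
  shows "ln (det (minv (Vbar d k \<gamma> lam Eu Et x \<pi> i t)) / det (Lambda0 d k \<gamma> lam Eu Et x \<pi> i t))
         \<le> 2 * real d * ln (3 * real k * (real k + 1) / 8 + \<gamma> * real k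
                              + 2 * lam * real (length Eu + length Et))"
proof -
  let ?C = "Cmat d k i t" and ?V = "Vmat d k \<gamma> lam Eu Et x \<pi> i t" and ?U = "V0 d k \<gamma> lam Eu Et"
  let ?\<mu> = "1 + real k ^ 2 * (2 * real k + 1) / 4"
    and ?B = "3 * real k * (real k + 1) / 8 + \<gamma> * real k + 2 * lam * real (length Eu + length Et)"
  have pd: "pos_def ?U ((2 * k + 1) * d)" using assms(6,7) by (intro pos_def_V0) auto
  have UV: "loewner_le ?U ?V ((2 * k + 1) * d)" by (rule loewner_le_V0_Vmat[OF assms(11)])
  have VU: "loewner_le ?V (?\<mu> \<cdot>\<^sub>m ?U) ((2 * k + 1) * d)"
    by (rule loewner_le_Vmat_smult_V0[OF assms(6,7,10,11)])
  note dets = det_inverse_congruence_le[OF V0_carrier Vmat_carrier Cmat_carrier[of d k i t] transpose_V0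
      transpose_Vmat pd UV VU transpose_Cmat_mult_vec_eq_0]
  have "minv (Vbar d k \<gamma> lam Eu Et x \<pi> i t) = ?C * minv ?V * transpose_mat ?C"
    unfolding Vbar_def using dets(1) Cmat_carrier[of d k i t] Vmat_carrier
    by (intro minv_minv[of _ d]) auto
  hence "ln (det (minv (Vbar d k \<gamma> lam Eu Et x \<pi> i t)) / det (Lambda0 d k \<gamma> lam Eu Et x \<pi> i t))
      \<le> real d * ln ?\<mu>"
    unfolding Lambda0_def using dets assms by (intro ln_div_le_of_le_power) (auto simp: add_pos_nonneg)
  also have "\<dots> \<le> real d * ln (?B\<^sup>2)"
  proof (intro mult_left_mono)
    have "0 < ?B" using assms(2,6,7) by (intro add_pos_nonneg) (auto intro: mult_pos_pos)
    thus "ln ?\<mu> \<le> ln (?B\<^sup>2)"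
      using inflation_le_sq[OF assms(2,6,7), of "length Eu + length Et"] by (simp add: add_pos_nonneg)
  qed simp
  also have "\<dots> = 2 * real d * ln ?B"
    using assms(2,6,7) by (simp add: ln_realpow add_pos_nonneg)
  finally show ?thesis .
qed

end
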